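(* Let $\gamma>1$, let $\bar\rho$ and $d$ be as in the context with $\phi$ sufficiently smooth, and let $i\ge1$ be an integer. Then for every sufficiently smooth $X:[0,1]\to\mathbb R$, $$\mathcal D_iL_0X=\mathcal L_i\mathcal D_iX+\sum_{j=0}^{i-1}q_{ij}\,\mathcal D_{i-j}X,\qquad q_{ij}=\sum_{k=1}^{2+j}\frac{\sum_{\ell=0}^{k}c_{ijk\ell}\,\partial_r^\ell d}{r^{2+j-k}},$$ for some functions $c_{ijk\ell}$ that are bounded on $[0,1]$.
   Context: $\phi\in C^k[0,1]$ with $\phi>0$ and $\phi'(0)=0$; $\bar\rho:=\phi$ and $d(r):=\bar\rho(r)^{-\gamma}\int_r^1\ell\bar\rho(\ell)\,d\ell$. $D_rf=r^{-2}\partial_r(r^2f)$; $\mathcal D_0=\mathrm{id}$, $\mathcal D_j=(\partial_rD_r)^{j/2}$ for $j$ even and $\mathcal D_j=D_r(\partial_rD_r)^{(j-1)/2}$ for $j$ odd. For $m\ge0$: $L_mf=\frac{1}{\bar\rho^{1+m(\gamma-1)}d^m}\partial_r\big(\bar\rho^{\gamma+m(\gamma-1)}d^{1+m}D_rf\big)$ and $L_m^*h=\frac{1}{\bar\rho^{1+m(\gamma-1)}d^m}D_r\big(\bar\rho^{\gamma+m(\gamma-1)}d^{1+m}\partial_rh\big)$. Then $\mathcal L_j\mathcal D_j:=L_j\mathcal D_j$ if $j$ is even and $\mathcal L_j\mathcal D_j:=L_j^*\mathcal D_j$ if $j$ is odd. *)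

theory Defs
  imports "HOL-Analysis.Analysis"
begin

definition Ck_on :: "nat \<Rightarrow> real set \<Rightarrow> (real \<Rightarrow> real) \<Rightarrow> bool" where
  "Ck_on k S f \<longleftrightarrow>
     (\<exists>D :: nat \<Rightarrow> real \<Rightarrow> real.
        (\<forall>x\<in>S. D 0 x = f x) \<and>
        (\<forall>j<k. \<forall>x\<in>S. (D j has_real_derivative D (Suc j) x) (at x within S)) \<and>
        (\<forall>j\<le>k. continuous_on S (D j)))"

text \<open>rho-bar := phi; d(r) = rho-bar(r)^(-gamma) * int_r^1 l rho-bar(l) dl\<close>
definition dfun :: "real \<Rightarrow> (real \<Rightarrow> real) \<Rightarrow> real \<Rightarrow> real" where
  "dfun \<gamma> \<phi> r = \<phi> r powr (-\<gamma>) * integral {r..1} (\<lambda>l. l * \<phi> l)"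

definition Dr :: "(real \<Rightarrow> real) \<Rightarrow> real \<Rightarrow> real" where
  "Dr f r = deriv (\<lambda>s. s\<^sup>2 * f s) r / r\<^sup>2"

fun calD :: "nat \<Rightarrow> (real \<Rightarrow> real) \<Rightarrow> real \<Rightarrow> real" where
  "calD 0 f = f"
| "calD (Suc j) f = (if even j then Dr (calD j f) else deriv (calD j f))"

definition Lop :: "real \<Rightarrow> (real \<Rightarrow> real) \<Rightarrow> nat \<Rightarrow> (real \<Rightarrow> real) \<Rightarrow> real \<Rightarrow> real" where
  "Lop \<gamma> \<phi> m f r =
     deriv (\<lambda>s. \<phi> s powr (\<gamma> + real m * (\<gamma> - 1)) * dfun \<gamma> \<phi> s ^ (1 + m) * Dr f s) r
     / (\<phi> r powr (1 + real m * (\<gamma> - 1)) * dfun \<gamma> \<phi> r ^ m)"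

definition Lstar :: "real \<Rightarrow> (real \<Rightarrow> real) \<Rightarrow> nat \<Rightarrow> (real \<Rightarrow> real) \<Rightarrow> real \<Rightarrow> real" where
  "Lstar \<gamma> \<phi> m h r =
     Dr (\<lambda>s. \<phi> s powr (\<gamma> + real m * (\<gamma> - 1)) * dfun \<gamma> \<phi> s ^ (1 + m) * deriv h s) r
     / (\<phi> r powr (1 + real m * (\<gamma> - 1)) * dfun \<gamma> \<phi> r ^ m)"

definition calL :: "real \<Rightarrow> (real \<Rightarrow> real) \<Rightarrow> nat \<Rightarrow> (real \<Rightarrow> real) \<Rightarrow> real \<Rightarrow> real" where
  "calL \<gamma> \<phi> j g = (if even j then Lop \<gamma> \<phi> j g else Lstar \<gamma> \<phi> j g)"

end

theory Submission
  imports Defs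
begin

text \<open>
  Both \<open>D\<^sub>r\<close> and \<open>\<partial>\<^sub>r\<close> act as \<open>f \<mapsto> f' + w f / r\<close> with \<open>w \<in> {2, 0}\<close>, so one more
  step applied to \<open>a \<cdot> calD k X\<close> gives \<open>a \<cdot> calD (k+1) X + (a' + (w - w\<^sub>k) a / r) \<cdot> calD k X\<close>.  With \<open>g = \<phi>\<^sup>\<gamma>\<^sup>-\<^sup>1 d\<close>, the two leading terms
  of \<open>calD i (L\<^sub>0 X)\<close> are \<open>g \<cdot> calD (i+2) X + (i g' - r) \<cdot> calD (i+1) X\<close>, and this is exactly
  \<open>calL i (calD i X)\<close> because \<open>\<phi> g = \<integral>\<^sub>r\<^sup>1 l \<phi>(l) dl\<close> has derivative \<open>-r \<phi>\<close>.  All other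
  coefficients stay in the class of sums of terms \<open>c \<partial>\<^sub>r\<^sup>l d / r\<^sup>p\<close> with \<open>c\<close> smooth and bounded,
  which is closed under \<open>\<partial>\<^sub>r\<close> and under division by \<open>r\<close>; a bounded term \<open>b\<close> enters that class
  by writing \<open>b = b r / r\<close> and eliminating the numerator \<open>r\<close> through \<open>(\<phi> g)' = -r \<phi>\<close>.
\<close>

section \<open>Functions with bounded derivatives\<close>

fun differentiable_upto :: "nat \<Rightarrow> real set \<Rightarrow> (real \<Rightarrow> real) \<Rightarrow> bool" where
  "differentiable_upto 0 S f \<longleftrightarrow> True"
| "differentiable_upto (Suc k) S f \<longleftrightarrow>
     (\<forall>x\<in>S. f field_differentiable at x) \<and> differentiable_upto k S (deriv f)"

fun bounded_derivs :: "nat \<Rightarrow> real set \<Rightarrow> (real \<Rightarrow> real) \<Rightarrow> bool" where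
  "bounded_derivs 0 S f \<longleftrightarrow> bounded (f ` S)"
| "bounded_derivs (Suc k) S f \<longleftrightarrow>
     bounded (f ` S) \<and> (\<forall>x\<in>S. f field_differentiable at x) \<and> bounded_derivs k S (deriv f)"

lemma bounded_image_iff_abs_le: "bounded (f ` S) \<longleftrightarrow> (\<exists>B. \<forall>x\<in>S. \<bar>f x :: real\<bar> \<le> B)"
  by (auto simp: bounded_iff)

lemma bounded_image_add:
  assumes "bounded (f ` S)" "bounded (g ` S)"
  shows "bounded ((\<lambda>x. f x + g x :: real) ` S)"
proof -
  obtain A B where "\<forall>x\<in>S. \<bar>f x\<bar> \<le> A" "\<forall>x\<in>S. \<bar>g x\<bar> \<le> B"
    using assms by (auto simp: bounded_image_iff_abs_le)
  then have "\<forall>x\<in>S. \<bar>f x + g x\<bar> \<le> A + B"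
    by (smt (verit))
  then show ?thesis
    by (auto simp: bounded_image_iff_abs_le)
qed

lemma bounded_image_mult:
  assumes "bounded (f ` S)" "bounded (g ` S)"
  shows "bounded ((\<lambda>x. f x * g x :: real) ` S)"
proof -
  obtain A B where "\<forall>x\<in>S. \<bar>f x\<bar> \<le> A" "\<forall>x\<in>S. \<bar>g x\<bar> \<le> B"
    using assms by (auto simp: bounded_image_iff_abs_le)
  then have "\<forall>x\<in>S. \<bar>f x * g x\<bar> \<le> A * B"
    by (simp add: abs_mult mult_mono')
  then show ?thesis
    by (auto simp: bounded_image_iff_abs_le)
qed

lemma bounded_image_powr:
  fixes f :: "real \<Rightarrow> real"
  assumes "bounded (f ` S)" "m > 0" "\<forall>x\<in>S. m \<le> f x"
  shows "bounded ((\<lambda>x. f x powr a) ` S)"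
proof -
  obtain B where B: "\<forall>x\<in>S. \<bar>f x\<bar> \<le> B"
    using assms(1) by (auto simp: bounded_image_iff_abs_le)
  have "\<bar>f x powr a\<bar> \<le> max (m powr a) (B powr a)" if x: "x \<in> S" for x
  proof -
    have "m \<le> f x" "f x \<le> B"
      using x B assms(3) abs_le_D1 by auto
    then show ?thesis
      using assms(2) powr_mono2[of a "f x" B] powr_mono2'[of a m "f x"]
      by (cases "a \<ge> 0") auto
  qed
  then show ?thesis
    by (auto simp: bounded_image_iff_abs_le)
qed

lemma deriv_add_at:
  "f field_differentiable at x \<Longrightarrow> g field_differentiable at x \<Longrightarrow>
   deriv (\<lambda>x. f x + g x) x = deriv f x + deriv g x"
  by (intro DERIV_imp_deriv derivative_intros) (auto simp: DERIV_deriv_iff_field_differentiable)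

lemma deriv_mult_at:
  "f field_differentiable at x \<Longrightarrow> g field_differentiable at x \<Longrightarrow>
   deriv (\<lambda>x. f x * g x) x = f x * deriv g x + deriv f x * g x"
  using DERIV_imp_deriv[OF DERIV_mult[of f "deriv f x" x _ g "deriv g x"]]
  by (simp add: DERIV_deriv_iff_field_differentiable algebra_simps)

lemma differentiable_upto_mono: "differentiable_upto k S f \<Longrightarrow> k' \<le> k \<Longrightarrow> differentiable_upto k' S f"
proof (induction k' arbitrary: k f)
  case (Suc k')
  then obtain k0 where "k = Suc k0" "k' \<le> k0"
    by (cases k) auto
  with Suc show ?case
    by auto
qed simp

lemma bounded_derivs_mono: "bounded_derivs k S f \<Longrightarrow> k' \<le> k \<Longrightarrow> bounded_derivs k' S f"
proof (induction k' arbitrary: k f)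
  case 0
  then show ?case
    by (cases k) auto
next
  case (Suc k')
  then obtain k0 where "k = Suc k0" "k' \<le> k0"
    by (cases k) auto
  with Suc show ?case
    by auto
qed

lemma bounded_derivs_imp_differentiable_upto: "bounded_derivs k S f \<Longrightarrow> differentiable_upto k S f"
  by (induction k arbitrary: f) auto

lemma bounded_derivs_bounded: "bounded_derivs k S f \<Longrightarrow> bounded (f ` S)"
  by (cases k) auto

lemma bounded_derivs_has_derivative:
  "bounded_derivs k S f \<Longrightarrow> k \<ge> 1 \<Longrightarrow> x \<in> S \<Longrightarrow> (f has_real_derivative deriv f x) (at x)"
  by (cases k) (auto simp: DERIV_deriv_iff_field_differentiable)

lemma bounded_derivs_funpow_deriv:
  "bounded_derivs k S f \<Longrightarrow> l \<le> k \<Longrightarrow> bounded_derivs (k - l) S ((deriv ^^ l) f)"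
proof (induction l arbitrary: k f)
  case (Suc l)
  then obtain k' where k: "k = Suc k'"
    by (cases k) auto
  with Suc have "bounded_derivs (k' - l) S ((deriv ^^ l) (deriv f))"
    by auto
  then show ?case
    by (simp add: k funpow_Suc_right del: funpow.simps)
qed simp

context
  fixes S :: "real set"
  assumes S: "open S"
begin

lemma deriv_cong_on_open:
  assumes "\<forall>x\<in>S. f x = g x" "x \<in> S"
  shows "deriv f x = deriv g x"
proof (rule deriv_cong_ev[OF _ refl])
  show "\<forall>\<^sub>F y in nhds x. f y = g y"
    using eventually_nhds_in_open[OF S assms(2)] assms(1) by (auto elim!: eventually_mono)
qed

lemma field_differentiable_cong_on_open:
  assumes "\<forall>x\<in>S. f x = g x" "x \<in> S" "f field_differentiable at x"
  shows "g field_differentiable at x"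
  using assms has_field_derivative_transform_within_open[OF _ S, of f _ x g]
  by (auto simp: field_differentiable_def)

lemma differentiable_upto_cong: "differentiable_upto k S f \<Longrightarrow> \<forall>x\<in>S. g x = f x \<Longrightarrow> differentiable_upto k S g"
proof (induction k arbitrary: f g)
  case (Suc k)
  then have "\<forall>x\<in>S. deriv g x = deriv f x"
    using deriv_cong_on_open by blast
  with Suc show ?case
    using field_differentiable_cong_on_open[of f g] by auto
qed simp

lemma bounded_derivs_cong: "bounded_derivs k S f \<Longrightarrow> \<forall>x\<in>S. g x = f x \<Longrightarrow> bounded_derivs k S g"
proof (induction k arbitrary: f g)
  case 0
  then show ?case
    by (simp add: image_def)
next
  case (Suc k)
  then have "\<forall>x\<in>S. deriv g x = deriv f x"
    using deriv_cong_on_open by blast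
  moreover have "g ` S = f ` S"
    using Suc.prems by (auto simp: image_def)
  ultimately show ?case
    using Suc field_differentiable_cong_on_open[of f g] by auto
qed

lemma bounded_derivs_const: "bounded_derivs k S (\<lambda>x. c)"
proof (induction k arbitrary: c)
  case (Suc k)
  then have "bounded_derivs k S (deriv (\<lambda>x. c))"
    by simp
  then show ?case
    by (auto simp: bounded_image_iff_abs_le)
qed (auto simp: bounded_image_iff_abs_le)

lemma differentiable_upto_const: "differentiable_upto k S (\<lambda>x. c)"
  by (rule bounded_derivs_imp_differentiable_upto[OF bounded_derivs_const])

lemma differentiable_upto_add:
  "differentiable_upto k S f \<Longrightarrow> differentiable_upto k S g \<Longrightarrow> differentiable_upto k S (\<lambda>x. f x + g x)"
proof (induction k arbitrary: f g)
  case (Suc k)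
  then have "differentiable_upto k S (\<lambda>x. deriv f x + deriv g x)"
    by auto
  then have "differentiable_upto k S (deriv (\<lambda>x. f x + g x))"
    by (rule differentiable_upto_cong) (use Suc.prems in \<open>auto intro!: deriv_add_at\<close>)
  with Suc.prems show ?case
    by (simp add: field_differentiable_add)
qed simp

lemma bounded_derivs_add:
  "bounded_derivs k S f \<Longrightarrow> bounded_derivs k S g \<Longrightarrow> bounded_derivs k S (\<lambda>x. f x + g x)"
proof (induction k arbitrary: f g)
  case (Suc k)
  then have "bounded_derivs k S (\<lambda>x. deriv f x + deriv g x)"
    by auto
  then have "bounded_derivs k S (deriv (\<lambda>x. f x + g x))"
    by (rule bounded_derivs_cong) (use Suc.prems in \<open>auto intro!: deriv_add_at\<close>)
  with Suc.prems show ?case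
    by (simp add: field_differentiable_add bounded_image_add)
qed (simp add: bounded_image_add)

lemma differentiable_upto_mult:
  "differentiable_upto k S f \<Longrightarrow> differentiable_upto k S g \<Longrightarrow> differentiable_upto k S (\<lambda>x. f x * g x)"
proof (induction k arbitrary: f g)
  case (Suc k)
  then have "differentiable_upto k S f" "differentiable_upto k S g"
    using differentiable_upto_mono le_Suc_eq by blast+
  with Suc have "differentiable_upto k S (\<lambda>x. f x * deriv g x + deriv f x * g x)"
    by (intro differentiable_upto_add) auto
  then have "differentiable_upto k S (deriv (\<lambda>x. f x * g x))"
    by (rule differentiable_upto_cong) (use Suc.prems in \<open>auto intro!: deriv_mult_at\<close>)
  with Suc.prems show ?case
    by (simp add: field_differentiable_mult)
qed simp

lemma bounded_derivs_mult:
  "bounded_derivs k S f \<Longrightarrow> bounded_derivs k S g \<Longrightarrow> bounded_derivs k S (\<lambda>x. f x * g x)"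
proof (induction k arbitrary: f g)
  case (Suc k)
  then have "bounded_derivs k S f" "bounded_derivs k S g"
    using bounded_derivs_mono le_Suc_eq by blast+
  with Suc have "bounded_derivs k S (\<lambda>x. f x * deriv g x + deriv f x * g x)"
    by (intro bounded_derivs_add) auto
  then have "bounded_derivs k S (deriv (\<lambda>x. f x * g x))"
    by (rule bounded_derivs_cong) (use Suc.prems in \<open>auto intro!: deriv_mult_at\<close>)
  with Suc.prems show ?case
    by (simp add: field_differentiable_mult bounded_image_mult)
qed (simp add: bounded_image_mult)

lemma bounded_derivs_ident:
  assumes "bounded S"
  shows "bounded_derivs k S (\<lambda>x. x)"
proof (cases k)
  case (Suc k')
  have "bounded_derivs k' S (deriv (\<lambda>x. x))"
    by (rule bounded_derivs_cong[OF bounded_derivs_const[of _ 1]]) simp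
  with Suc assms show ?thesis
    by (auto intro: field_differentiable_ident)
qed (use assms in simp)

lemma differentiable_upto_ident: "differentiable_upto k S (\<lambda>x. x)"
proof (cases k)
  case (Suc k')
  have "differentiable_upto k' S (deriv (\<lambda>x. x))"
    by (rule differentiable_upto_cong[OF differentiable_upto_const[of _ 1]]) simp
  with Suc show ?thesis
    by (auto intro: field_differentiable_ident)
qed simp

lemma differentiable_upto_inverse:
  "differentiable_upto k S g \<Longrightarrow> \<forall>x\<in>S. g x \<noteq> 0 \<Longrightarrow> differentiable_upto k S (\<lambda>x. 1 / g x)"
proof (induction k arbitrary: g)
  case (Suc k)
  have inv: "differentiable_upto k S (\<lambda>x. 1 / g x)"
    using Suc.IH[OF differentiable_upto_mono[OF Suc.prems(1)]] Suc.prems(2) by simp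
  have "differentiable_upto k S (\<lambda>x. (-1) * deriv g x)"
    using Suc.prems by (intro differentiable_upto_mult differentiable_upto_const) auto
  then have "differentiable_upto k S (\<lambda>x. (-1) * deriv g x * (1 / g x) * (1 / g x))"
    using differentiable_upto_mult[OF differentiable_upto_mult inv] inv by blast
  then have "differentiable_upto k S (deriv (\<lambda>x. 1 / g x))"
  proof (rule differentiable_upto_cong, intro ballI)
    fix x assume x: "x \<in> S"
    have "(g has_real_derivative deriv g x) (at x)"
      using Suc.prems x by (simp add: DERIV_deriv_iff_field_differentiable)
    from DERIV_imp_deriv[OF DERIV_inverse_fun[OF this]] x Suc.prems
    show "deriv (\<lambda>x. 1 / g x) x = (-1) * deriv g x * (1 / g x) * (1 / g x)"
      by (simp add: inverse_eq_divide power2_eq_square)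
  qed
  with Suc.prems show ?case
    by (simp add: field_differentiable_divide field_differentiable_const)
qed simp

lemma bounded_derivs_powr:
  assumes "bounded_derivs k S f" "m > 0" "\<forall>x\<in>S. m \<le> f x"
  shows "bounded_derivs k S (\<lambda>x. f x powr a)"
  using assms(1)
proof (induction k arbitrary: a)
  case 0
  then show ?case
    using bounded_image_powr[OF _ assms(2,3)] by simp
next
  case (Suc k)
  have der: "((\<lambda>x. f x powr a) has_real_derivative a * f x powr (a - 1) * deriv f x) (at x)"
    if x: "x \<in> S" for x
    using DERIV_fun_powr[of f "deriv f x" x a] Suc.prems x assms(2,3)
    by (fastforce simp: DERIV_deriv_iff_field_differentiable)
  have "bounded_derivs k S (\<lambda>x. f x powr (a - 1))"
    using Suc bounded_derivs_mono[of "Suc k" S f k] by auto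
  with Suc.prems have "bounded_derivs k S (\<lambda>x. a * f x powr (a - 1) * deriv f x)"
    by (intro bounded_derivs_mult bounded_derivs_const) auto
  then have "bounded_derivs k S (deriv (\<lambda>x. f x powr a))"
    by (rule bounded_derivs_cong) (auto intro: DERIV_imp_deriv der)
  moreover have "bounded ((\<lambda>x. f x powr a) ` S)"
    using bounded_image_powr Suc.prems assms(2,3) by simp
  ultimately show ?case
    using der by (auto simp: field_differentiable_def)
qed

end

section \<open>Continuously differentiable functions and the tail moment\<close>

lemma bounded_image_open_interval:
  "continuous_on {a..b} f \<Longrightarrow> bounded (f ` {a<..<b::real})"
  by (meson bounded_subset compact_continuous_image compact_imp_bounded compact_Icc
      greaterThanLessThan_subseteq_atLeastAtMost_iff image_mono order_refl)

lemma at_within_Icc_interior: "x \<in> {a<..<b::real} \<Longrightarrow> at x within {a..b} = at x"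
  by (intro at_within_interior) (simp add: interior_atLeastAtMost_real)

lemma Ck_on_imp_continuous_on: "Ck_on k S f \<Longrightarrow> continuous_on S f"
  unfolding Ck_on_def using continuous_on_cong by fastforce

lemma Ck_on_imp_bounded_derivs:
  assumes "Ck_on k {a..b} f"
  shows "bounded_derivs k {a<..<b} f"
proof -
  obtain D where D0: "\<forall>x\<in>{a..b}. D 0 x = f x"
    and D: "\<forall>j<k. \<forall>x\<in>{a..b}. (D j has_real_derivative D (Suc j) x) (at x within {a..b})"
    and cont: "\<forall>j\<le>k. continuous_on {a..b} (D j)"
    using assms unfolding Ck_on_def by blast
  have "bounded_derivs n {a<..<b} (D j)" if "j + n \<le> k" for j n
    using that
  proof (induction n arbitrary: j)
    case 0
    then show ?case
      using cont bounded_image_open_interval by auto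
  next
    case (Suc n)
    have der: "(D j has_real_derivative D (Suc j) x) (at x)" if x: "x \<in> {a<..<b}" for x
    proof -
      have "j < k" "x \<in> {a..b}"
        using Suc.prems x by auto
      with D show ?thesis
        using at_within_Icc_interior[OF x] by metis
    qed
    have "bounded_derivs n {a<..<b} (D (Suc j))"
      using Suc by simp
    then have "bounded_derivs n {a<..<b} (deriv (D j))"
      by (rule bounded_derivs_cong[OF open_greaterThanLessThan]) (auto intro: DERIV_imp_deriv der)
    moreover have "bounded (D j ` {a<..<b})"
      using cont Suc.prems by (intro bounded_image_open_interval) simp
    ultimately show ?case
      using der by (auto simp: field_differentiable_def simp del: greaterThanLessThan_iff)
  qed
  from this[of 0] show ?thesis
    by (rule bounded_derivs_cong[OF open_greaterThanLessThan]) (use D0 in auto)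
qed

definition tail_moment :: "(real \<Rightarrow> real) \<Rightarrow> real \<Rightarrow> real" where
  "tail_moment \<phi> r = integral {r..1} (\<lambda>l. l * \<phi> l)"

lemma dfun_eq_tail_moment: "dfun \<gamma> \<phi> r = \<phi> r powr (-\<gamma>) * tail_moment \<phi> r"
  by (simp add: dfun_def tail_moment_def)

lemma tail_moment_has_derivative:
  assumes "continuous_on {0..1} \<phi>" "t \<in> {0..1}"
  shows "(tail_moment \<phi> has_real_derivative - (t * \<phi> t)) (at t within {0..1})"
  unfolding tail_moment_def
  by (rule integral_has_real_derivative') (use assms in \<open>auto intro!: continuous_intros\<close>)

lemma tail_moment_pos:
  assumes "continuous_on {0..1} \<phi>" "\<forall>x\<in>{0..1}. \<phi> x > 0" "r \<in> {0<..<1}"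
  shows "tail_moment \<phi> r > 0"
proof -
  have "integral {r..1} (\<lambda>l. 0) < integral {r..1} (\<lambda>l. l * \<phi> l)"
  proof (rule integral_less_real)
    show "continuous_on {r..1} (\<lambda>l. l * \<phi> l)"
      using assms by (auto intro!: continuous_intros elim: continuous_on_subset)
  qed (use assms in auto)
  then show ?thesis
    by (simp add: tail_moment_def)
qed

lemma tail_moment_bounded_derivs:
  assumes "continuous_on {0..1} \<phi>" "bounded_derivs k {0<..<1} \<phi>"
  shows "bounded_derivs (Suc k) {0<..<1} (tail_moment \<phi>)"
proof -
  have der: "(tail_moment \<phi> has_real_derivative - (x * \<phi> x)) (at x)" if x: "x \<in> {0<..<1}" for x
    using tail_moment_has_derivative[OF assms(1), of x] at_within_Icc_interior[OF x] x by simp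
  have "bounded_derivs k {0<..<1} (\<lambda>x. - 1 * (x * \<phi> x))"
    using assms by (intro bounded_derivs_mult bounded_derivs_const bounded_derivs_ident) auto
  then have "bounded_derivs k {0<..<1} (deriv (tail_moment \<phi>))"
    by (rule bounded_derivs_cong[OF open_greaterThanLessThan]) (auto intro: DERIV_imp_deriv der)
  moreover have "continuous_on {0..1} (tail_moment \<phi>)"
    using tail_moment_has_derivative[OF assms(1)]
    by (meson DERIV_continuous continuous_on_eq_continuous_within)
  ultimately show ?thesis
    using der bounded_image_open_interval
    by (auto simp: field_differentiable_def simp del: greaterThanLessThan_iff)
qed

section \<open>The operators \<open>Dr\<close> and \<open>calD\<close>\<close>

lemma Dr_eq:
  assumes "(f has_real_derivative f') (at r)" "r \<noteq> 0"
  shows "Dr f r = f' + 2 * f r / r"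
proof -
  have "((\<lambda>s. s\<^sup>2 * f s) has_real_derivative 2 * r * f r + r\<^sup>2 * f') (at r)"
    using assms(1) by (auto intro!: derivative_eq_intros)
  then show ?thesis
    using assms(2) by (simp add: Dr_def DERIV_imp_deriv field_simps power2_eq_square)
qed

lemma Dr_cong: "open S \<Longrightarrow> \<forall>x\<in>S. f x = g x \<Longrightarrow> r \<in> S \<Longrightarrow> Dr f r = Dr g r"
  unfolding Dr_def by (subst deriv_cong_on_open[of S _ "\<lambda>s. s\<^sup>2 * g s"]) auto

definition calD_step :: "nat \<Rightarrow> (real \<Rightarrow> real) \<Rightarrow> real \<Rightarrow> real" where
  "calD_step k f = (if even k then Dr f else deriv f)"

definition step_weight :: "nat \<Rightarrow> real" where
  "step_weight k = (if even k then 2 else 0)"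

lemma calD_Suc_eq_step: "calD (Suc k) f = calD_step k (calD k f)"
  by (simp add: calD_step_def)

declare calD.simps(2) [simp del]

lemma calD_step_eq:
  "(f has_real_derivative f') (at r) \<Longrightarrow> r \<noteq> 0 \<Longrightarrow> calD_step k f r = f' + step_weight k * f r / r"
  by (auto simp: calD_step_def step_weight_def Dr_eq DERIV_imp_deriv)

lemma calD_step_cong: "open S \<Longrightarrow> \<forall>x\<in>S. f x = g x \<Longrightarrow> r \<in> S \<Longrightarrow> calD_step k f r = calD_step k g r"
  by (auto simp: calD_step_def Dr_cong deriv_cong_on_open)

lemma calD_has_derivative:
  assumes "calD k X field_differentiable at r" "r \<noteq> 0"
  shows "(calD k X has_real_derivative calD (Suc k) X r - step_weight k * calD k X r / r) (at r)"
  using assms calD_step_eq[of "calD k X" "deriv (calD k X) r" r k]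
  by (simp add: calD_Suc_eq_step DERIV_deriv_iff_field_differentiable)

lemma differentiable_upto_calD:
  assumes "open S" "0 \<notin> S" "differentiable_upto M S X" "k \<le> M"
  shows "differentiable_upto (M - k) S (calD k X)"
  using assms(4)
proof (induction k)
  case (Suc k)
  then have "differentiable_upto (Suc (M - Suc k)) S (calD k X)"
    by (simp add: Suc_diff_Suc)
  then have diff: "\<forall>x\<in>S. calD k X field_differentiable at x"
    and "differentiable_upto (M - Suc k) S (calD k X)" "differentiable_upto (M - Suc k) S (deriv (calD k X))"
    using differentiable_upto_mono[of "Suc (M - Suc k)" S "calD k X" "M - Suc k"] by auto
  with assms(1,2) have "differentiable_upto (M - Suc k) S
      (\<lambda>x. deriv (calD k X) x + step_weight k * (1 / x) * calD k X x)"
    by (intro differentiable_upto_add differentiable_upto_mult differentiable_upto_const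
        differentiable_upto_inverse differentiable_upto_ident) auto
  then show ?case
  proof (rule differentiable_upto_cong[OF assms(1)], intro ballI)
    fix x assume "x \<in> S"
    with diff assms(2) show "calD (Suc k) X x = deriv (calD k X) x + step_weight k * (1 / x) * calD k X x"
      using calD_step_eq[of "calD k X" "deriv (calD k X) x" x k]
      by (auto simp: calD_Suc_eq_step DERIV_deriv_iff_field_differentiable)
  qed
qed (use assms(3) in simp)

definition calD_step_coeff :: "nat \<Rightarrow> nat \<Rightarrow> (real \<Rightarrow> real) \<Rightarrow> real \<Rightarrow> real" where
  "calD_step_coeff i k a r = deriv a r + (step_weight i - step_weight k) * a r / r"

lemma calD_step_coeff_same [simp]: "calD_step_coeff i i a r = deriv a r"
  by (simp add: calD_step_coeff_def)

lemma calD_step_coeff_Suc_Suc [simp]: "calD_step_coeff i (Suc (Suc i)) a r = deriv a r"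
  by (simp add: calD_step_coeff_def step_weight_def)

lemma calD_step_sum:
  assumes "finite M" "\<forall>m\<in>M. f m field_differentiable at r" "r \<noteq> 0"
  shows "calD_step i (\<lambda>s. \<Sum>m\<in>M. f m s) r = (\<Sum>m\<in>M. calD_step i (f m) r)"
proof -
  have der: "\<forall>m\<in>M. (f m has_real_derivative deriv (f m) r) (at r)"
    using assms(2) by (simp add: DERIV_deriv_iff_field_differentiable)
  have "((\<lambda>s. \<Sum>m\<in>M. f m s) has_real_derivative (\<Sum>m\<in>M. deriv (f m) r)) (at r)"
    by (rule DERIV_sum) (use der in auto)
  then have "calD_step i (\<lambda>s. \<Sum>m\<in>M. f m s) r
      = (\<Sum>m\<in>M. deriv (f m) r) + step_weight i * (\<Sum>m\<in>M. f m r) / r"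
    using assms(3) by (simp add: calD_step_eq)
  also have "\<dots> = (\<Sum>m\<in>M. deriv (f m) r + step_weight i * f m r / r)"
    by (simp add: sum.distrib sum_distrib_left sum_divide_distrib)
  also have "\<dots> = (\<Sum>m\<in>M. calD_step i (f m) r)"
    using der assms(3) by (intro sum.cong) (auto simp: calD_step_eq)
  finally show ?thesis .
qed

lemma calD_step_add:
  assumes "f field_differentiable at r" "h field_differentiable at r" "r \<noteq> 0"
  shows "calD_step i (\<lambda>s. f s + h s) r = calD_step i f r + calD_step i h r"
  using calD_step_sum[of "{True, False}" "\<lambda>b. if b then f else h" r i] assms by simp

lemma calD_step_mult_calD:
  assumes "a field_differentiable at r" "calD k X field_differentiable at r" "r \<noteq> 0"
  shows "calD_step i (\<lambda>s. a s * calD k X s) r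
           = a r * calD (Suc k) X r + calD_step_coeff i k a r * calD k X r"
proof -
  have "((\<lambda>s. a s * calD k X s) has_real_derivative
         a r * (calD (Suc k) X r - step_weight k * calD k X r / r) + deriv a r * calD k X r) (at r)"
    using DERIV_mult[OF _ calD_has_derivative[OF assms(2,3)], of a "deriv a r"] assms(1)
    by (simp add: DERIV_deriv_iff_field_differentiable algebra_simps)
  with assms(3) show ?thesis
    by (simp add: calD_step_eq calD_step_coeff_def field_simps)
qed

lemma calL_calD_eq_step:
  "calL \<gamma> \<phi> i (calD i X) r
     = calD_step (Suc i) (\<lambda>s. \<phi> s powr (\<gamma> + real i * (\<gamma> - 1)) * dfun \<gamma> \<phi> s ^ (1 + i) * calD (Suc i) X s) r
       / (\<phi> r powr (1 + real i * (\<gamma> - 1)) * dfun \<gamma> \<phi> r ^ i)"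
  by (simp add: calL_def Lop_def Lstar_def calD_Suc_eq_step calD_step_def)

lemma sum_reindex_coeffs:
  fixes a b u :: "nat \<Rightarrow> real"
  shows "(\<Sum>j<i. a j * u (Suc i - j) + b j * u (i - j)) + c * u (Suc i)
       = (\<Sum>j<Suc i. ((if j < i then a j else 0) + (if j = 0 then c else b (j - 1))) * u (Suc i - j))"
proof -
  have "(\<Sum>j<Suc i. (if j = 0 then c else b (j - 1)) * u (Suc i - j)) = c * u (Suc i) + (\<Sum>j<i. b j * u (i - j))"
    by (simp add: sum.lessThan_Suc_shift del: sum.lessThan_Suc)
  then show ?thesis
    by (simp add: distrib_right sum.distrib)
qed

section \<open>Admissible coefficients\<close>

text \<open>The class of the coefficients \<open>q\<^sub>i\<^sub>j\<close> of order \<open>j\<close>.  \<open>K\<close> counts the bounded derivatives still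
  available for the factors \<open>c\<close>; it drops by one with every \<open>\<partial>\<^sub>r\<close>.\<close>
inductive admissible_coeff :: "(real \<Rightarrow> real) \<Rightarrow> nat \<Rightarrow> nat \<Rightarrow> (real \<Rightarrow> real) \<Rightarrow> bool"
  for d where
  monomial: "bounded_derivs K {0<..<1} c \<Longrightarrow> p \<le> 1 + j \<Longrightarrow> l \<le> 2 + j - p \<Longrightarrow>
    admissible_coeff d K j (\<lambda>r. c r * (deriv ^^ l) d r / r ^ p)"
| zero: "admissible_coeff d K j (\<lambda>r. 0)"
| add: "admissible_coeff d K j f \<Longrightarrow> admissible_coeff d K j h \<Longrightarrow>
    admissible_coeff d K j (\<lambda>r. f r + h r)"
| cong: "admissible_coeff d K j f \<Longrightarrow> \<forall>r\<in>{0<..<1}. h r = f r \<Longrightarrow> admissible_coeff d K j h"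

definition coeff_expansion ::
    "(real \<Rightarrow> real) \<Rightarrow> nat \<Rightarrow> (nat \<Rightarrow> nat \<Rightarrow> real \<Rightarrow> real) \<Rightarrow> real \<Rightarrow> real" where
  "coeff_expansion d j c r = (\<Sum>k=1..2+j. (\<Sum>l=0..k. c k l r * (deriv ^^ l) d r) / r ^ (2 + j - k))"

lemma admissible_coeff_mono: "admissible_coeff d K j f \<Longrightarrow> K' \<le> K \<Longrightarrow> admissible_coeff d K' j f"
  by (induction rule: admissible_coeff.induct)
    (auto intro: admissible_coeff.intros bounded_derivs_mono)

lemma admissible_coeff_scale: "admissible_coeff d K j f \<Longrightarrow> admissible_coeff d K j (\<lambda>r. a * f r)"
proof (induction rule: admissible_coeff.induct)
  case (monomial K c p j l)
  then have "admissible_coeff d K j (\<lambda>r. (a * c r) * (deriv ^^ l) d r / r ^ p)"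
    by (intro admissible_coeff.monomial bounded_derivs_mult bounded_derivs_const) auto
  then show ?case
    by (rule admissible_coeff.cong) auto
next
  case (add K j f h)
  then have "admissible_coeff d K j (\<lambda>r. a * f r + a * h r)"
    by (intro admissible_coeff.add)
  then show ?case
    by (rule admissible_coeff.cong) (auto simp: algebra_simps)
qed (auto intro: admissible_coeff.intros)

lemma admissible_coeff_divide_r: "admissible_coeff d K j f \<Longrightarrow> admissible_coeff d K (Suc j) (\<lambda>r. f r / r)"
proof (induction rule: admissible_coeff.induct)
  case (monomial K c p j l)
  then have "admissible_coeff d K (Suc j) (\<lambda>r. c r * (deriv ^^ l) d r / r ^ Suc p)"
    by (intro admissible_coeff.monomial) auto
  then show ?case
    by (rule admissible_coeff.cong) auto
next
  case (add K j f h)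
  then have "admissible_coeff d K (Suc j) (\<lambda>r. f r / r + h r / r)"
    by (intro admissible_coeff.add)
  then show ?case
    by (rule admissible_coeff.cong) (auto simp: add_divide_distrib)
qed (auto intro: admissible_coeff.intros)

lemma DERIV_mult_divide_power:
  assumes c: "(c has_real_derivative c') (at x)" and D: "(D has_real_derivative D') (at x)"
    and "x \<noteq> 0"
  shows "((\<lambda>r. c r * D r / r ^ p) has_real_derivative
           c' * D x / x ^ p + c x * D' / x ^ p + (- real p * c x) * D x / x ^ Suc p) (at x)"
proof -
  have "x ^ p = x * x ^ (p - Suc 0)" if "0 < p"
    using that by (metis Suc_pred power_Suc)
  then show ?thesis
    using \<open>x \<noteq> 0\<close> by (auto intro!: derivative_eq_intros c D simp: field_simps power_Suc)
qed

lemma admissible_coeff_monomial_deriv: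
  assumes c: "bounded_derivs (Suc K) {0<..<1} c" and "p \<le> 1 + j" "l \<le> 2 + j - p"
    and D: "\<forall>x\<in>{0<..<1}. (deriv ^^ l) d field_differentiable at x"
  shows "(\<forall>x\<in>{0<..<1}. (\<lambda>r. c r * (deriv ^^ l) d r / r ^ p) field_differentiable at x)
    \<and> admissible_coeff d K (Suc j) (deriv (\<lambda>r. c r * (deriv ^^ l) d r / r ^ p))"
proof -
  let ?f' = "\<lambda>x. deriv c x * (deriv ^^ l) d x / x ^ p + c x * (deriv ^^ Suc l) d x / x ^ p
                 + (- real p * c x) * (deriv ^^ l) d x / x ^ Suc p"
  have der: "((\<lambda>r. c r * (deriv ^^ l) d r / r ^ p) has_real_derivative ?f' x) (at x)"
    if x: "x \<in> {0<..<1}" for x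
    using c D x
    by (intro DERIV_mult_divide_power bounded_derivs_has_derivative[of "Suc K"])
      (auto simp: DERIV_deriv_iff_field_differentiable)
  have "admissible_coeff d K (Suc j) ?f'"
    using assms bounded_derivs_mono[OF c, of K]
    by (intro admissible_coeff.add admissible_coeff.monomial bounded_derivs_mult bounded_derivs_const) auto
  then have "admissible_coeff d K (Suc j) (deriv (\<lambda>r. c r * (deriv ^^ l) d r / r ^ p))"
    by (rule admissible_coeff.cong) (use der DERIV_imp_deriv in blast)
  with der show ?thesis
    by (auto simp: field_differentiable_def simp del: greaterThanLessThan_iff)
qed

lemma admissible_coeff_deriv:
  assumes "admissible_coeff d (Suc K) j f"
    and "\<forall>l \<le> 2 + j. \<forall>x\<in>{0<..<1}. (deriv ^^ l) d field_differentiable at x"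
  shows "(\<forall>x\<in>{0<..<1}. f field_differentiable at x) \<and> admissible_coeff d K (Suc j) (deriv f)"
  using assms
proof (induction "Suc K" j f arbitrary: K rule: admissible_coeff.induct)
  case (monomial c p j l)
  then show ?case
    by (intro admissible_coeff_monomial_deriv) auto
next
  case (zero j)
  have "admissible_coeff d K (Suc j) (deriv (\<lambda>r. 0))"
    by (rule admissible_coeff.cong[OF admissible_coeff.zero]) auto
  then show ?case
    by auto
next
  case (add j f h)
  then have f: "\<forall>x\<in>{0<..<1}. f field_differentiable at x" "admissible_coeff d K (Suc j) (deriv f)"
    and h: "\<forall>x\<in>{0<..<1}. h field_differentiable at x" "admissible_coeff d K (Suc j) (deriv h)"
    by auto
  have "admissible_coeff d K (Suc j) (deriv (\<lambda>x. f x + h x))"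
    by (rule admissible_coeff.cong[OF admissible_coeff.add[OF f(2) h(2)]])
      (use f h in \<open>auto intro: deriv_add_at\<close>)
  with f h show ?case
    by (auto intro: field_differentiable_add)
next
  case (cong j f h)
  then have f: "\<forall>x\<in>{0<..<1}. f field_differentiable at x" "admissible_coeff d K (Suc j) (deriv f)"
    by auto
  have "admissible_coeff d K (Suc j) (deriv h)"
    by (rule admissible_coeff.cong[OF f(2)])
      (metis cong(3) deriv_cong_on_open open_greaterThanLessThan)
  moreover have "\<forall>x\<in>{0<..<1}. h field_differentiable at x"
    using f(1) cong(3) field_differentiable_cong_on_open[of "{0<..<1}" f h] by simp
  ultimately show ?case
    by blast
qed

lemma bounded_image_extend_by_zero:
  fixes c :: "real \<Rightarrow> real"
  assumes "bounded (c ` {0<..<1::real})"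
  shows "bounded ((\<lambda>r. if r \<in> {0<..<1} \<and> P then c r else 0) ` {0..1})"
proof -
  obtain B where "\<forall>x\<in>{0<..<1}. \<bar>c x\<bar> \<le> B"
    using assms by (auto simp: bounded_image_iff_abs_le)
  then have "\<forall>x\<in>{0..1}. \<bar>if x \<in> {0<..<1} \<and> P then c x else 0\<bar> \<le> max B 0"
    by (auto simp del: greaterThanLessThan_iff)
  then show ?thesis
    by (rule iffD2[OF bounded_image_iff_abs_le, OF exI])
qed

lemma coeff_expansion_single:
  assumes "1 \<le> k0" "k0 \<le> 2 + j" "l0 \<le> k0" "r \<in> {0<..<1}"
  shows "coeff_expansion d j (\<lambda>k l r. if r \<in> {0<..<1} \<and> k = k0 \<and> l = l0 then c r else 0) r
           = c r * (deriv ^^ l0) d r / r ^ (2 + j - k0)"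
proof -
  have "(\<Sum>l=0..k. (if r \<in> {0<..<1} \<and> k = k0 \<and> l = l0 then c r else 0) * (deriv ^^ l) d r)
          = (if k = k0 then c r * (deriv ^^ l0) d r else 0)" for k
    using assms by (auto simp: if_distrib[of "\<lambda>x. x * _"] cong: if_cong)
  then show ?thesis
    using assms by (simp add: coeff_expansion_def if_distrib[of "\<lambda>x. x / _"] cong: if_cong)
qed

lemma admissible_coeff_expansion:
  assumes "admissible_coeff d K j f"
  shows "\<exists>c. (\<forall>k l. bounded (c k l ` {0..1})) \<and> (\<forall>r\<in>{0<..<1}. f r = coeff_expansion d j c r)"
  using assms
proof (induction rule: admissible_coeff.induct)
  case (monomial K c p j l)
  let ?c = "\<lambda>k l' r. if r \<in> {0<..<1} \<and> k = 2 + j - p \<and> l' = l then c r else 0"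
  have "\<forall>k l'. bounded (?c k l' ` {0..1})"
    using bounded_derivs_bounded[OF monomial.hyps(1)] by (intro allI bounded_image_extend_by_zero)
  moreover have "c r * (deriv ^^ l) d r / r ^ p = coeff_expansion d j ?c r" if "r \<in> {0<..<1}" for r
    using coeff_expansion_single[of "2 + j - p" j l r d c] monomial.hyps that by simp
  ultimately show ?case
    by (intro exI[of _ ?c]) blast
next
  case (zero K j)
  show ?case
    by (rule exI[of _ "\<lambda>k l r. 0"]) (auto simp: coeff_expansion_def bounded_image_iff_abs_le)
next
  case (add K j f h)
  then obtain c1 c2 where "\<forall>k l. bounded (c1 k l ` {0..1})" "\<forall>r\<in>{0<..<1}. f r = coeff_expansion d j c1 r"
    and "\<forall>k l. bounded (c2 k l ` {0..1})" "\<forall>r\<in>{0<..<1}. h r = coeff_expansion d j c2 r"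
    by blast
  then show ?case
    by (intro exI[of _ "\<lambda>k l r. c1 k l r + c2 k l r"])
      (auto intro: bounded_image_add simp: coeff_expansion_def distrib_right sum.distrib add_divide_distrib)
qed auto

lemma admissible_coeff_calD_step_coeff:
  assumes "admissible_coeff d K j (deriv a)" "admissible_coeff d K j (\<lambda>r. a r / r)"
  shows "admissible_coeff d K j (calD_step_coeff i k a)"
proof -
  have "admissible_coeff d K j (\<lambda>r. deriv a r + (step_weight i - step_weight k) * (a r / r))"
    using assms by (intro admissible_coeff.add admissible_coeff_scale)
  then show ?thesis
    by (rule admissible_coeff.cong) (simp add: calD_step_coeff_def)
qed

section \<open>The expansion for a fixed profile\<close>

locale positive_profile =
  fixes \<gamma> :: real and \<phi> :: "real \<Rightarrow> real" and M :: nat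
  assumes bounded_derivs_phi: "bounded_derivs M {0<..<1} \<phi>"
    and continuous_phi: "continuous_on {0..1} \<phi>"
    and phi_pos: "\<forall>x\<in>{0..1}. \<phi> x > 0"
    and M_ge_3: "3 \<le> M"
begin

abbreviation d :: "real \<Rightarrow> real" where
  "d \<equiv> dfun \<gamma> \<phi>"

definition principal_coeff :: "real \<Rightarrow> real" where
  "principal_coeff r = \<phi> r powr (\<gamma> - 1) * d r"

definition drift_coeff :: "nat \<Rightarrow> real \<Rightarrow> real" where
  "drift_coeff i r = real i * deriv principal_coeff r - r"

lemma phi_pos_open: "r \<in> {0<..<1} \<Longrightarrow> \<phi> r > 0"
  using phi_pos by auto

lemma phi_lower_bound: "\<exists>m>0. \<forall>x\<in>{0<..<1}. m \<le> \<phi> x"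
proof -
  obtain x0 where "x0 \<in> {0..1}" "\<forall>y\<in>{0..1}. \<phi> x0 \<le> \<phi> y"
    using continuous_attains_inf[OF compact_Icc _ continuous_phi] by auto
  with phi_pos show ?thesis
    by (intro exI[of _ "\<phi> x0"]) auto
qed

lemma bounded_derivs_phi_powr: "bounded_derivs M {0<..<1} (\<lambda>r. \<phi> r powr a)"
  using phi_lower_bound bounded_derivs_powr[OF open_greaterThanLessThan bounded_derivs_phi] by blast

lemma bounded_derivs_deriv_phi: "bounded_derivs (M - 1) {0<..<1} (deriv \<phi>)"
  using bounded_derivs_funpow_deriv[OF bounded_derivs_phi, of 1] M_ge_3 by simp

lemma phi_has_derivative: "r \<in> {0<..<1} \<Longrightarrow> (\<phi> has_real_derivative deriv \<phi> r) (at r)"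
  using bounded_derivs_has_derivative[OF bounded_derivs_phi] M_ge_3 by simp

lemma bounded_derivs_d: "bounded_derivs M {0<..<1} d"
proof -
  have "bounded_derivs M {0<..<1} (tail_moment \<phi>)"
    using bounded_derivs_mono[OF tail_moment_bounded_derivs[OF continuous_phi bounded_derivs_phi]] by simp
  then have "bounded_derivs M {0<..<1} (\<lambda>r. \<phi> r powr (-\<gamma>) * tail_moment \<phi> r)"
    by (intro bounded_derivs_mult[OF open_greaterThanLessThan] bounded_derivs_phi_powr)
  then show ?thesis
    by (simp add: dfun_eq_tail_moment[abs_def])
qed

lemma d_pos: "r \<in> {0<..<1} \<Longrightarrow> d r > 0"
  using tail_moment_pos[OF continuous_phi phi_pos, of r] phi_pos_open[of r]
  by (simp add: dfun_eq_tail_moment)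

lemma d_has_derivative: "r \<in> {0<..<1} \<Longrightarrow> (d has_real_derivative deriv d r) (at r)"
  using bounded_derivs_has_derivative[OF bounded_derivs_d] M_ge_3 by simp

lemma bounded_derivs_principal_coeff: "bounded_derivs M {0<..<1} principal_coeff"
  unfolding principal_coeff_def[abs_def]
  by (intro bounded_derivs_mult[OF open_greaterThanLessThan] bounded_derivs_phi_powr bounded_derivs_d)

lemma principal_coeff_has_derivative:
  assumes r: "r \<in> {0<..<1}"
  shows "(principal_coeff has_real_derivative
           (\<gamma> - 1) * \<phi> r powr (\<gamma> - 2) * deriv \<phi> r * d r + \<phi> r powr (\<gamma> - 1) * deriv d r) (at r)"
proof -
  have "\<gamma> - 1 - 1 = \<gamma> - 2"
    by simp
  then have "((\<lambda>x. \<phi> x powr (\<gamma> - 1)) has_real_derivative (\<gamma> - 1) * \<phi> r powr (\<gamma> - 2) * deriv \<phi> r) (at r)"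
    using DERIV_fun_powr[OF phi_has_derivative[OF r] phi_pos_open[OF r], of "\<gamma> - 1"] by simp
  from DERIV_mult[OF this d_has_derivative[OF r]] show ?thesis
    unfolding principal_coeff_def[abs_def] by (simp add: algebra_simps)
qed

lemma phi_mult_principal_coeff: "r \<in> {0<..<1} \<Longrightarrow> \<phi> r * principal_coeff r = tail_moment \<phi> r"
  using phi_pos_open[of r]
  by (simp add: principal_coeff_def dfun_eq_tail_moment powr_minus powr_diff field_simps)

text \<open>The identity that trades a factor \<open>r\<close> for \<open>d\<close> and \<open>\<partial>\<^sub>r d\<close>.\<close>
lemma principal_coeff_deriv_identity:
  assumes r: "r \<in> {0<..<1}"
  shows "deriv \<phi> r * principal_coeff r + \<phi> r * deriv principal_coeff r = - r * \<phi> r"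
proof -
  have "((\<lambda>x. \<phi> x * principal_coeff x) has_real_derivative
          deriv \<phi> r * principal_coeff r + deriv principal_coeff r * \<phi> r) (at r)"
    using DERIV_mult[OF phi_has_derivative[OF r] principal_coeff_has_derivative[OF r]]
    by (simp only: DERIV_imp_deriv[OF principal_coeff_has_derivative[OF r], symmetric])
  moreover have "(tail_moment \<phi> has_real_derivative - (r * \<phi> r)) (at r)"
    using tail_moment_has_derivative[OF continuous_phi, of r] at_within_Icc_interior[OF r] r by simp
  then have "((\<lambda>x. \<phi> x * principal_coeff x) has_real_derivative - (r * \<phi> r)) (at r)"
    by (rule has_field_derivative_transform_within_open[OF _ open_greaterThanLessThan r])
      (simp add: phi_mult_principal_coeff)
  ultimately show ?thesis
    using DERIV_unique by (fastforce simp: mult.commute)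
qed

lemma r_eq_d_derivs:
  assumes r: "r \<in> {0<..<1}"
  shows "r = - (\<phi> r powr (\<gamma> - 1)) * deriv d r - \<gamma> * \<phi> r powr (\<gamma> - 2) * deriv \<phi> r * d r"
proof -
  have "\<phi> r powr (\<gamma> - 1) = \<phi> r * \<phi> r powr (\<gamma> - 2)"
    using phi_pos_open[OF r] by (simp add: powr_mult_base)
  then have "\<phi> r * (r + \<phi> r powr (\<gamma> - 1) * deriv d r + \<gamma> * \<phi> r powr (\<gamma> - 2) * deriv \<phi> r * d r) = 0"
    using principal_coeff_deriv_identity[OF r] DERIV_imp_deriv[OF principal_coeff_has_derivative[OF r]]
    by (simp add: principal_coeff_def algebra_simps)
  then have "r + \<phi> r powr (\<gamma> - 1) * deriv d r + \<gamma> * \<phi> r powr (\<gamma> - 2) * deriv \<phi> r * d r = 0"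
    using phi_pos_open[OF r] by simp
  then show ?thesis
    by linarith
qed

lemma principal_coeff_pos: "r \<in> {0<..<1} \<Longrightarrow> principal_coeff r > 0"
  using phi_pos_open[of r] d_pos[of r] by (simp add: principal_coeff_def)

lemma phi_mult_principal_coeff_power:
  assumes "s \<in> {0<..<1}"
  shows "\<phi> s * principal_coeff s ^ n = \<phi> s powr (1 + real n * (\<gamma> - 1)) * d s ^ n"
  using phi_pos_open[OF assms]
  by (simp add: principal_coeff_def power_mult_distrib powr_power powr_mult_base mult.commute)

lemma calD_differentiable_at:
  assumes "differentiable_upto M {0<..<1} X" "k < M" "r \<in> {0<..<1}"
  shows "calD k X field_differentiable at r"
proof -
  have "differentiable_upto (Suc (M - Suc k)) {0<..<1} (calD k X)"
    using differentiable_upto_calD[OF open_greaterThanLessThan _ assms(1), of k] assms(2)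
    by (simp add: Suc_diff_Suc)
  with assms(3) show ?thesis
    by simp
qed

lemma calL_calD_eq:
  assumes X: "differentiable_upto M {0<..<1} X" and i: "i + 2 \<le> M" and r: "r \<in> {0<..<1}"
  shows "calL \<gamma> \<phi> i (calD i X) r = principal_coeff r * calD (i + 2) X r + drift_coeff i r * calD (i + 1) X r"
proof -
  define W where "W s = \<phi> s * principal_coeff s ^ Suc i" for s
  let ?g = "principal_coeff r" and ?g' = "deriv principal_coeff r"
  have "(principal_coeff has_real_derivative ?g') (at r)"
    using principal_coeff_has_derivative[OF r] DERIV_imp_deriv by metis
  from DERIV_mult[OF phi_has_derivative[OF r] DERIV_power[OF this, of "Suc i"]]
  have W_der: "(W has_real_derivative deriv \<phi> r * ?g ^ Suc i + real (Suc i) * ?g' * ?g ^ i * \<phi> r) (at r)"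
    by (simp add: W_def[abs_def] mult.assoc)
  have D_diff: "calD (Suc i) X field_differentiable at r"
    using calD_differentiable_at[OF X _ r] i by simp
  have "calL \<gamma> \<phi> i (calD i X) r = calD_step (Suc i) (\<lambda>s. W s * calD (Suc i) X s) r / (\<phi> r * ?g ^ i)"
    unfolding calL_calD_eq_step phi_mult_principal_coeff_power[OF r]
  proof (rule arg_cong2[where f = "(/)", OF calD_step_cong[OF open_greaterThanLessThan _ r] refl], intro ballI)
    fix s :: real assume "s \<in> {0<..<1}"
    then show "\<phi> s powr (\<gamma> + real i * (\<gamma> - 1)) * d s ^ (1 + i) * calD (Suc i) X s = W s * calD (Suc i) X s"
      unfolding W_def phi_mult_principal_coeff_power[OF \<open>s \<in> {0<..<1}\<close>] by (simp add: algebra_simps)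
  qed
  also have "\<dots> = (W r * calD (Suc (Suc i)) X r + deriv W r * calD (Suc i) X r) / (\<phi> r * ?g ^ i)"
    using W_der D_diff r by (subst calD_step_mult_calD) (auto simp: field_differentiable_def)
  also have "\<dots> = ?g * calD (i + 2) X r + drift_coeff i r * calD (i + 1) X r"
  proof -
    have "(deriv \<phi> r * ?g + \<phi> r * ?g') * ?g ^ i = - r * \<phi> r * ?g ^ i"
      using principal_coeff_deriv_identity[OF r] by simp
    then have "deriv W r = \<phi> r * ?g ^ i * drift_coeff i r"
      using DERIV_imp_deriv[OF W_der] by (simp add: drift_coeff_def algebra_simps)
    then show ?thesis
      using phi_pos_open[OF r] principal_coeff_pos[OF r] by (simp add: W_def field_simps)
  qed
  finally show ?thesis .
qed

text \<open>Writing \<open>b = b r / r\<close> and expanding the numerator \<open>r\<close> by \<open>r_eq_d_derivs\<close>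
  turns every smooth bounded function into a coefficient of order 0.\<close>
lemma admissible_coeff_of_bounded_derivs:
  assumes b: "bounded_derivs K {0<..<1} b" and K: "K \<le> M - 1"
  shows "admissible_coeff d K 0 b"
proof -
  have "bounded_derivs K {0<..<1} (\<lambda>r. (-1) * b r * \<phi> r powr (\<gamma> - 1))"
    "bounded_derivs K {0<..<1} (\<lambda>r. (- \<gamma>) * b r * \<phi> r powr (\<gamma> - 2) * deriv \<phi> r)"
    using b K bounded_derivs_mono[OF bounded_derivs_phi_powr] bounded_derivs_mono[OF bounded_derivs_deriv_phi]
    by (intro bounded_derivs_mult[OF open_greaterThanLessThan] bounded_derivs_const; force)+
  then have "admissible_coeff d K 0 (\<lambda>r. ((-1) * b r * \<phi> r powr (\<gamma> - 1)) * (deriv ^^ 1) d r / r ^ 1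
      + ((- \<gamma>) * b r * \<phi> r powr (\<gamma> - 2) * deriv \<phi> r) * (deriv ^^ 0) d r / r ^ 1)"
    by (intro admissible_coeff.add admissible_coeff.monomial) auto
  then show ?thesis
  proof (rule admissible_coeff.cong, intro ballI)
    fix r :: real assume r: "r \<in> {0<..<1}"
    then have "b r = b r * r / r"
      by simp
    also have "\<dots> = ((-1) * b r * \<phi> r powr (\<gamma> - 1)) * (deriv ^^ 1) d r / r ^ 1
        + ((- \<gamma>) * b r * \<phi> r powr (\<gamma> - 2) * deriv \<phi> r) * (deriv ^^ 0) d r / r ^ 1"
      by (subst r_eq_d_derivs[OF r]) (simp add: algebra_simps add_divide_distrib diff_divide_distrib)
    finally show "b r = \<dots>" .
  qed
qed

lemma bounded_derivs_drift_coeff: "bounded_derivs (M - 1) {0<..<1} (drift_coeff i)"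
proof -
  have "bounded_derivs (M - 1) {0<..<1} (deriv principal_coeff)"
    using bounded_derivs_funpow_deriv[OF bounded_derivs_principal_coeff, of 1] M_ge_3 by simp
  then have "bounded_derivs (M - 1) {0<..<1} (\<lambda>r. real i * deriv principal_coeff r + (-1) * r)"
    by (intro bounded_derivs_add[OF open_greaterThanLessThan] bounded_derivs_mult[OF open_greaterThanLessThan]
        bounded_derivs_const bounded_derivs_ident) auto
  then show ?thesis
    by (simp add: drift_coeff_def[abs_def])
qed

lemma admissible_coeff_drift_div_r:
  assumes K: "K \<le> M - 1"
  shows "admissible_coeff d K 0 (\<lambda>r. drift_coeff i r / r)"
proof -
  have "bounded_derivs K {0<..<1} (\<lambda>r. real i * (\<gamma> - 1) * \<phi> r powr (\<gamma> - 2) * deriv \<phi> r)"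
    "bounded_derivs K {0<..<1} (\<lambda>r. real i * \<phi> r powr (\<gamma> - 1))"
    using K bounded_derivs_mono[OF bounded_derivs_phi_powr] bounded_derivs_mono[OF bounded_derivs_deriv_phi]
    by (intro bounded_derivs_mult[OF open_greaterThanLessThan] bounded_derivs_const; force)+
  then have "admissible_coeff d K 0 (\<lambda>r. (real i * (\<gamma> - 1) * \<phi> r powr (\<gamma> - 2) * deriv \<phi> r) * (deriv ^^ 0) d r / r ^ 1
      + (real i * \<phi> r powr (\<gamma> - 1)) * (deriv ^^ 1) d r / r ^ 1 + (-1))"
    using K by (intro admissible_coeff.add admissible_coeff.monomial admissible_coeff_of_bounded_derivs
        bounded_derivs_const) auto
  then show ?thesis
  proof (rule admissible_coeff.cong, intro ballI)
    fix r :: real assume r: "r \<in> {0<..<1}"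
    then show "drift_coeff i r / r = (real i * (\<gamma> - 1) * \<phi> r powr (\<gamma> - 2) * deriv \<phi> r) * (deriv ^^ 0) d r / r ^ 1
        + (real i * \<phi> r powr (\<gamma> - 1)) * (deriv ^^ 1) d r / r ^ 1 + (-1)"
      by (simp add: DERIV_imp_deriv[OF principal_coeff_has_derivative[OF r]] drift_coeff_def field_simps)
  qed
qed

lemma funpow_deriv_d_differentiable:
  "l < M \<Longrightarrow> x \<in> {0<..<1} \<Longrightarrow> (deriv ^^ l) d field_differentiable at x"
  using bounded_derivs_has_derivative[OF bounded_derivs_funpow_deriv[OF bounded_derivs_d, of l], of x]
  by (auto simp: field_differentiable_def Suc_le_eq)

text \<open>The coefficients of \<open>calD (Suc i - j) X\<close> in \<open>calD (Suc i) (L\<^sub>0 X)\<close>, obtained from the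
  coefficients \<open>q j\<close> of \<open>calD (i - j) X\<close> in \<open>calD i (L\<^sub>0 X)\<close>.\<close>
definition next_coeffs :: "nat \<Rightarrow> (nat \<Rightarrow> real \<Rightarrow> real) \<Rightarrow> nat \<Rightarrow> real \<Rightarrow> real" where
  "next_coeffs i q j r = (if j < i then q j r else 0)
     + calD_step_coeff i (Suc i - j) (if j = 0 then drift_coeff i else q (j - 1)) r"

lemma admissible_next_coeffs:
  assumes iM: "i + 4 \<le> M" and q: "\<forall>j<i. admissible_coeff d (M - 2 - i) j (q j)" and j: "j < Suc i"
  shows "admissible_coeff d (M - 3 - i) j (next_coeffs i q j)"
proof -
  define K where "K = M - 3 - i"
  have K: "M - 2 - i = Suc K" "K \<le> M - 2"
    using iM by (auto simp: K_def)
  have "admissible_coeff d K j (\<lambda>r. if j < i then q j r else 0)"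
    using q admissible_coeff_mono[of d "Suc K" j "q j" K] K
    by (cases "j < i") (auto intro: admissible_coeff.zero)
  moreover have "admissible_coeff d K j (calD_step_coeff i (Suc i - j) (if j = 0 then drift_coeff i else q (j - 1)))"
  proof (cases j)
    case 0
    have "bounded_derivs K {0<..<1} (deriv (drift_coeff i))"
      using bounded_derivs_mono[OF bounded_derivs_funpow_deriv[OF bounded_derivs_drift_coeff, of 1], of K] K iM
      by simp
    with K 0 show ?thesis
      by (simp add: admissible_coeff_calD_step_coeff admissible_coeff_of_bounded_derivs
          admissible_coeff_drift_div_r)
  next
    case (Suc j')
    have q': "admissible_coeff d (Suc K) j' (q j')"
      using q K Suc j by auto
    have "admissible_coeff d K (Suc j') (deriv (q j'))"
      using admissible_coeff_deriv[OF q'] funpow_deriv_d_differentiable iM Suc j by auto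
    moreover have "admissible_coeff d K (Suc j') (\<lambda>r. q j' r / r)"
      using admissible_coeff_divide_r[OF admissible_coeff_mono[OF q']] by simp
    ultimately show ?thesis
      using Suc by (auto intro: admissible_coeff_calD_step_coeff)
  qed
  ultimately show ?thesis
    unfolding next_coeffs_def K_def by (rule admissible_coeff.add)
qed

lemma principal_coeff_differentiable_at: "r \<in> {0<..<1} \<Longrightarrow> principal_coeff field_differentiable at r"
  using bounded_derivs_has_derivative[OF bounded_derivs_principal_coeff, of r] M_ge_3
  by (auto simp: field_differentiable_def)

lemma drift_coeff_differentiable_at: "r \<in> {0<..<1} \<Longrightarrow> drift_coeff i field_differentiable at r"
  using bounded_derivs_has_derivative[OF bounded_derivs_drift_coeff, of r] M_ge_3
  by (auto simp: field_differentiable_def Suc_le_eq)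

lemma next_coeffs_sum:
  "(\<Sum>j<i. q j r * calD (Suc i - j) X r + calD_step_coeff i (i - j) (q j) r * calD (i - j) X r)
      + calD_step_coeff i (Suc i) (drift_coeff i) r * calD (Suc i) X r
    = (\<Sum>j<Suc i. next_coeffs i q j r * calD (Suc i - j) X r)"
  unfolding sum_reindex_coeffs[where u = "\<lambda>k. calD k X r" and a = "\<lambda>j. q j r"
      and b = "\<lambda>j. calD_step_coeff i (i - j) (q j) r"] next_coeffs_def
  by (intro sum.cong) (auto simp: gr0_conv_Suc)

lemma calD_L0_step:
  assumes X: "differentiable_upto M {0<..<1} X" and iM: "i + 4 \<le> M" and r: "r \<in> {0<..<1}"
    and q_diff: "\<forall>j<i. q j field_differentiable at r"
    and expansion: "\<forall>x\<in>{0<..<1}. calD i (Lop \<gamma> \<phi> 0 X) x = principal_coeff x * calD (i + 2) X x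
               + drift_coeff i x * calD (i + 1) X x + (\<Sum>j<i. q j x * calD (i - j) X x)"
  shows "calD (Suc i) (Lop \<gamma> \<phi> 0 X) r = principal_coeff r * calD (Suc i + 2) X r
           + drift_coeff (Suc i) r * calD (Suc i + 1) X r
           + (\<Sum>j<Suc i. next_coeffs i q j r * calD (Suc i - j) X r)"
proof -
  let ?g = principal_coeff and ?A = "drift_coeff i" and ?D = "\<lambda>k. calD k X"
  have r0: "r \<noteq> 0"
    using r by simp
  have D_diff: "?D k field_differentiable at r" if "k \<le> i + 2" for k
    using calD_differentiable_at[OF X _ r] that iM by simp
  note g_diff = principal_coeff_differentiable_at[OF r] and A_diff = drift_coeff_differentiable_at[OF r]
  have t1: "(\<lambda>x. ?g x * ?D (i + 2) x) field_differentiable at r"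
    and t2: "(\<lambda>x. ?A x * ?D (i + 1) x) field_differentiable at r"
    and t3: "\<forall>j\<in>{..<i}. (\<lambda>x. q j x * ?D (i - j) x) field_differentiable at r"
    using g_diff A_diff q_diff D_diff by (auto intro: field_differentiable_mult)
  then have t3': "(\<lambda>x. \<Sum>j<i. q j x * ?D (i - j) x) field_differentiable at r"
    by (auto intro: field_differentiable_sum)
  have "calD (Suc i) (Lop \<gamma> \<phi> 0 X) r
      = calD_step i (\<lambda>x. (?g x * ?D (i + 2) x + ?A x * ?D (i + 1) x) + (\<Sum>j<i. q j x * ?D (i - j) x)) r"
    unfolding calD_Suc_eq_step using expansion r by (intro calD_step_cong) auto
  also have "\<dots> = (calD_step i (\<lambda>x. ?g x * ?D (i + 2) x) r + calD_step i (\<lambda>x. ?A x * ?D (i + 1) x) r)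
      + (\<Sum>j<i. calD_step i (\<lambda>x. q j x * ?D (i - j) x) r)"
    using calD_step_add[OF field_differentiable_add[OF t1 t2] t3' r0] calD_step_add[OF t1 t2 r0]
      calD_step_sum[OF _ t3 r0] by simp
  also have "\<dots> = (?g r * ?D (i + 3) r + deriv ?g r * ?D (i + 2) r)
      + (?A r * ?D (i + 2) r + calD_step_coeff i (Suc i) ?A r * ?D (i + 1) r)
      + (\<Sum>j<i. q j r * ?D (Suc i - j) r + calD_step_coeff i (i - j) (q j) r * ?D (i - j) r)"
    using g_diff A_diff q_diff D_diff r0
    by (simp add: calD_step_mult_calD Suc_diff_le numeral_3_eq_3 numeral_2_eq_2)
  also have "\<dots> = ?g r * ?D (Suc i + 2) r + drift_coeff (Suc i) r * ?D (Suc i + 1) r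
      + (\<Sum>j<Suc i. next_coeffs i q j r * ?D (Suc i - j) r)"
  proof -
    have "drift_coeff (Suc i) r = ?A r + deriv ?g r"
      by (simp add: drift_coeff_def algebra_simps)
    with next_coeffs_sum[where i = i and q = q and r = r and X = X] show ?thesis
      by (simp add: algebra_simps numeral_3_eq_3 numeral_2_eq_2)
  qed
  finally show ?thesis .
qed

lemma calD_L0_expansion:
  assumes "i + 3 \<le> M"
  shows "\<exists>q. (\<forall>j<i. admissible_coeff d (M - 2 - i) j (q j)) \<and>
     (\<forall>X. differentiable_upto M {0<..<1} X \<longrightarrow> (\<forall>r\<in>{0<..<1}. calD i (Lop \<gamma> \<phi> 0 X) r
        = principal_coeff r * calD (i + 2) X r + drift_coeff i r * calD (i + 1) X r
          + (\<Sum>j<i. q j r * calD (i - j) X r)))"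
  using assms
proof (induction i)
  case 0
  show ?case
    using calL_calD_eq[of _ 0] M_ge_3 by (intro exI[of _ "\<lambda>j r. 0"]) (simp add: calL_def)
next
  case (Suc i)
  then obtain q where q: "\<forall>j<i. admissible_coeff d (M - 2 - i) j (q j)"
    and IH: "\<forall>X. differentiable_upto M {0<..<1} X \<longrightarrow> (\<forall>r\<in>{0<..<1}. calD i (Lop \<gamma> \<phi> 0 X) r
        = principal_coeff r * calD (i + 2) X r + drift_coeff i r * calD (i + 1) X r
          + (\<Sum>j<i. q j r * calD (i - j) X r))"
    by auto
  have "\<forall>r\<in>{0<..<1}. q j field_differentiable at r" if "j < i" for j
  proof -
    have "admissible_coeff d (Suc (M - 3 - i)) j (q j)"
      using q that Suc.prems by (simp add: Suc_diff_Suc numeral_3_eq_3 numeral_2_eq_2)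
    then show ?thesis
      using admissible_coeff_deriv funpow_deriv_d_differentiable that Suc.prems by auto
  qed
  then show ?case
    using admissible_next_coeffs[OF _ q] calD_L0_step[where q = q] IH Suc.prems
    by (intro exI[of _ "next_coeffs i q"]) (auto simp: numeral_3_eq_3 numeral_2_eq_2)
qed

lemma calD_L0_coeff_expansion:
  assumes "1 \<le> i" "i + 3 \<le> M"
  shows "\<exists>c. (\<forall>j k l. bounded (c j k l ` {0..1})) \<and>
     (\<forall>X. Ck_on M {0..1} X \<longrightarrow> (\<forall>r\<in>{0<..<1}. calD i (Lop \<gamma> \<phi> 0 X) r
        = calL \<gamma> \<phi> i (calD i X) r + (\<Sum>j=0..i-1. coeff_expansion d j (c j) r * calD (i - j) X r)))"
proof -
  obtain q where q: "\<forall>j<i. admissible_coeff d (M - 2 - i) j (q j)"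
    and expansion: "\<forall>X. differentiable_upto M {0<..<1} X \<longrightarrow> (\<forall>r\<in>{0<..<1}. calD i (Lop \<gamma> \<phi> 0 X) r
        = principal_coeff r * calD (i + 2) X r + drift_coeff i r * calD (i + 1) X r
          + (\<Sum>j<i. q j r * calD (i - j) X r))"
    using calD_L0_expansion[OF assms(2)] by blast
  have "\<exists>C. (\<forall>k l. bounded (C k l ` {0..1}))
      \<and> (j < i \<longrightarrow> (\<forall>r\<in>{0<..<1}. q j r = coeff_expansion d j C r))" for j
  proof (cases "j < i")
    case True
    then show ?thesis
      using admissible_coeff_expansion q by blast
  next
    case False
    then show ?thesis
      by (intro exI[of _ "\<lambda>k l r. 0"]) (auto simp: bounded_image_iff_abs_le)
  qed
  then obtain c where c: "\<forall>j. (\<forall>k l. bounded (c j k l ` {0..1}))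
      \<and> (j < i \<longrightarrow> (\<forall>r\<in>{0<..<1}. q j r = coeff_expansion d j (c j) r))"
    by metis
  have "{0..i - 1} = {..<i}"
    using assms(1) by auto
  with c expansion calL_calD_eq assms(2) show ?thesis
    using Ck_on_imp_bounded_derivs bounded_derivs_imp_differentiable_upto
    by (intro exI[of _ c]) auto
qed

end

theorem lemmaA2:
  fixes \<gamma> :: real and i :: nat
  assumes "\<gamma> > 1" and "i \<ge> 1"
  shows "\<exists>N::nat. \<forall>\<phi>. Ck_on N {0..1} \<phi> \<and> (\<forall>r\<in>{0..1}. \<phi> r > 0)
           \<and> (\<phi> has_real_derivative 0) (at 0 within {0..1}) \<longrightarrow>
     (\<exists>c :: nat \<Rightarrow> nat \<Rightarrow> nat \<Rightarrow> real \<Rightarrow> real.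
        (\<forall>j k l. bounded (c j k l ` {0..1})) \<and>
        (\<forall>X. Ck_on N {0..1} X \<longrightarrow>
           (\<forall>r\<in>{0<..<1}.
              calD i (Lop \<gamma> \<phi> 0 X) r =
                calL \<gamma> \<phi> i (calD i X) r
                + (\<Sum>j=0..i-1.
                     (\<Sum>k=1..2+j. (\<Sum>l=0..k. c j k l r * (deriv ^^ l) (dfun \<gamma> \<phi>) r)
                                     / r ^ (2 + j - k))
                     * calD (i - j) X r))))"
proof -
  have profile: "positive_profile \<phi> (i + 3)"
    if "Ck_on (i + 3) {0..1} \<phi>" "\<forall>r\<in>{0..1}. \<phi> r > 0" for \<phi>
    using that by (intro positive_profile.intro Ck_on_imp_bounded_derivs Ck_on_imp_continuous_on) auto
  show ?thesis
    using positive_profile.calD_L0_coeff_expansion[OF profile assms(2)]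
    unfolding coeff_expansion_def by (intro exI[of _ "i + 3"]) blast
qed

end
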